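(* Let $\frac{1}{2}\leq \alpha <1$ and let $G$ be a graph with $n$ vertices, $m$ edges, maximum degree $\Delta$ and minimum degree $\delta$. If $1\leq k\leq n-1$, then $$S_k(A_{\alpha}(G))\leq \frac{2\alpha km}{n}+\sqrt{\frac{k(n-k)}{n}\left(2m(1-\alpha)^2+\frac{\alpha^2n}{4}(\Delta-\delta)^2\right)}.$$
   Context: All graphs are simple and undirected. $A_{\alpha}(G)=\alpha D(G)+(1-\alpha)A(G)$, where $A(G)$ is the adjacency matrix and $D(G)$ the diagonal degree matrix. For a real symmetric matrix $M$ with eigenvalues $\lambda_1(M)\geq\cdots\geq\lambda_n(M)$, $S_k(M)=\sum_{i=1}^k\lambda_i(M)$. *)

theory Defs
  imports Complex_Main "Jordan_Normal_Form.Char_Poly"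
begin

text \<open>Eigenvalues of a real square matrix M (n x n), listed with multiplicity in
non-increasing order: the unique non-increasing list whose linear factors multiply to the
characteristic polynomial (exists and is unique for real symmetric matrices).\<close>
definition eigvals_desc :: "real mat \<Rightarrow> real list" where
  "eigvals_desc M = (SOME ls. length ls = dim_row M \<and> sorted_wrt (\<ge>) ls \<and>
      char_poly M = (\<Prod>a\<leftarrow>ls. [:-a, 1:]))"

definition S_k :: "nat \<Rightarrow> real mat \<Rightarrow> real" where
  "S_k k M = sum_list (take k (eigvals_desc M))"

definition simple_graph :: "nat \<Rightarrow> (nat \<Rightarrow> nat \<Rightarrow> bool) \<Rightarrow> bool" where
  "simple_graph n E \<longleftrightarrow> (\<forall>i<n. \<forall>j<n. E i j \<longleftrightarrow> E j i) \<and> (\<forall>i<n. \<not> E i i)"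

definition degree :: "nat \<Rightarrow> (nat \<Rightarrow> nat \<Rightarrow> bool) \<Rightarrow> nat \<Rightarrow> nat" where
  "degree n E i = card {j. j < n \<and> E i j}"

definition num_edges :: "nat \<Rightarrow> (nat \<Rightarrow> nat \<Rightarrow> bool) \<Rightarrow> nat" where
  "num_edges n E = card {(i, j). i < j \<and> j < n \<and> E i j}"

definition max_degree :: "nat \<Rightarrow> (nat \<Rightarrow> nat \<Rightarrow> bool) \<Rightarrow> nat" where
  "max_degree n E = Max (degree n E ` {0..<n})"

definition min_degree :: "nat \<Rightarrow> (nat \<Rightarrow> nat \<Rightarrow> bool) \<Rightarrow> nat" where
  "min_degree n E = Min (degree n E ` {0..<n})"

definition adj_mat :: "nat \<Rightarrow> (nat \<Rightarrow> nat \<Rightarrow> bool) \<Rightarrow> real mat" where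
  "adj_mat n E = mat n n (\<lambda>(i, j). if E i j then 1 else 0)"

definition deg_mat :: "nat \<Rightarrow> (nat \<Rightarrow> nat \<Rightarrow> bool) \<Rightarrow> real mat" where
  "deg_mat n E = mat n n (\<lambda>(i, j). if i = j then real (degree n E i) else 0)"

definition A_alpha :: "real \<Rightarrow> nat \<Rightarrow> (nat \<Rightarrow> nat \<Rightarrow> bool) \<Rightarrow> real mat" where
  "A_alpha \<alpha> n E = \<alpha> \<cdot>\<^sub>m deg_mat n E + (1 - \<alpha>) \<cdot>\<^sub>m adj_mat n E"

end

theory Submission
  imports Defs "Jordan_Normal_Form.Schur_Decomposition" "HOL-Analysis.Convex"
begin

text \<open>The eigenvalues \<open>\<lambda>\<^sub>i\<close> of the real symmetric matrix \<open>A\<^sub>\<alpha>(G)\<close> satisfy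
\<open>\<Sum>\<lambda>\<^sub>i = tr A\<^sub>\<alpha> = 2\<alpha>m\<close> and \<open>\<Sum>\<lambda>\<^sub>i\<^sup>2 = tr A\<^sub>\<alpha>\<^sup>2 = \<alpha>\<^sup>2\<Sum>d\<^sub>i\<^sup>2 + 2(1-\<alpha>)\<^sup>2m\<close>.
Applying Cauchy-Schwarz separately to \<open>k\<close> of the eigenvalues and to the remaining \<open>n - k\<close>
bounds the deviation of their sum from its share \<open>k/n \<Sum>\<lambda>\<^sub>i\<close> of the trace by
\<open>sqrt (k(n-k)/n (\<Sum>\<lambda>\<^sub>i\<^sup>2 - (\<Sum>\<lambda>\<^sub>i)\<^sup>2/n))\<close>.
Popoviciu's inequality \<open>\<Sum>d\<^sub>i\<^sup>2 - (\<Sum>d\<^sub>i)\<^sup>2/n \<le> n(\<Delta>-\<delta>)\<^sup>2/4\<close> then bounds the degree part of this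
variance.\<close>

unbundle no inner_syntax

lemma real_symmetric_eigenvalue_real:
  fixes M :: "real mat"
  assumes M: "M \<in> carrier_mat n n" and sym: "transpose_mat M = M"
    and ev: "eigenvalue (map_mat complex_of_real M) a"
  shows "a \<in> \<real>"
proof -
  let ?C = "map_mat complex_of_real M"
  have C: "?C \<in> carrier_mat n n" using M by simp
  obtain v where v: "v \<in> carrier_vec n" and v0: "v \<noteq> 0\<^sub>v n" and Cv: "?C *\<^sub>v v = a \<cdot>\<^sub>v v"
    using ev M unfolding eigenvalue_def eigenvector_def by auto
  have conj_Cv: "conjugate (?C *\<^sub>v v) = ?C *\<^sub>v conjugate v"
    using M v by (intro eq_vecI) (auto simp: scalar_prod_def sum_conjugate conjugate_dist_mul)
  have "(?C *\<^sub>v v) \<bullet>c v = (transpose_mat ?C *\<^sub>v v) \<bullet> conjugate v"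
    by (simp add: map_mat_transpose sym)
  also have "\<dots> = v \<bullet>c (?C *\<^sub>v v)"
    using M v by (simp add: transpose_vec_mult_scalar[OF C] conj_Cv)
  finally have "a * (v \<bullet>c v) = conjugate a * (v \<bullet>c v)"
    using v by (simp add: Cv conjugate_smult_vec)
  moreover have "v \<bullet>c v \<noteq> 0" using v v0 by simp
  ultimately have "cnj a = a" by simp
  then show ?thesis by (simp add: Reals_cnj_iff)
qed

interpretation of_real_poly_hom: map_poly_inj_idom_hom "of_real :: real \<Rightarrow> complex" ..

lemma real_symmetric_char_poly_splits:
  fixes M :: "real mat"
  assumes M: "M \<in> carrier_mat n n" and sym: "transpose_mat M = M"
  shows "\<exists>es. length es = n \<and> char_poly M = (\<Prod>e\<leftarrow>es. [:-e, 1:])"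
proof -
  let ?C = "map_mat complex_of_real M"
  have C: "?C \<in> carrier_mat n n" using M by simp
  obtain es where cp: "char_poly ?C = (\<Prod>e\<leftarrow>es. [:-e, 1:])" and len: "length es = n"
    using char_poly_factorized[OF C] by blast
  have real: "e \<in> \<real>" if "e \<in> set es" for e
    using real_symmetric_eigenvalue_real[OF M sym] linear_poly_root[OF that]
    unfolding eigenvalue_root_char_poly[OF C] cp by blast
  have "map_poly of_real (\<Prod>e\<leftarrow>map Re es. [:-e, 1:]) = (\<Prod>e\<leftarrow>es. [:-e, 1:])"
    using real by (auto simp: of_real_poly_hom.hom_prod_list o_def intro!: arg_cong[of _ _ prod_list])
  also have "\<dots> = map_poly of_real (char_poly M)"
    unfolding cp[symmetric] by (rule of_real_hom.char_poly_hom[OF M])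
  finally have "char_poly M = (\<Prod>e\<leftarrow>map Re es. [:-e, 1:])" by simp
  then show ?thesis using len by (intro exI[of _ "map Re es"]) simp
qed

lemma eigvals_desc_real_symmetric:
  fixes M :: "real mat"
  assumes M: "M \<in> carrier_mat n n" and sym: "transpose_mat M = M"
  shows "length (eigvals_desc M) = n" and "char_poly M = (\<Prod>e\<leftarrow>eigvals_desc M. [:-e, 1:])"
proof -
  obtain es where len: "length es = n" and cp: "char_poly M = (\<Prod>e\<leftarrow>es. [:-e, 1:])"
    using real_symmetric_char_poly_splits[OF M sym] by blast
  define es' where "es' = rev (sort es)"
  have "mset (map (\<lambda>e. [:-e, 1:]) es') = mset (map (\<lambda>e. [:-e, 1:]) es)"
    unfolding es'_def by simp
  then have "char_poly M = (\<Prod>e\<leftarrow>es'. [:-e, 1:])"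
    unfolding cp by (metis prod_mset_prod_list)
  moreover have "length es' = dim_row M" and "sorted_wrt (\<ge>) es'"
    using len M unfolding es'_def by (simp_all add: sorted_wrt_rev)
  ultimately have "\<exists>es. length es = dim_row M \<and> sorted_wrt (\<ge>) es
      \<and> char_poly M = (\<Prod>e\<leftarrow>es. [:-e, 1:])"
    by blast
  from someI_ex[OF this] show "length (eigvals_desc M) = n"
    and "char_poly M = (\<Prod>e\<leftarrow>eigvals_desc M. [:-e, 1:])"
    using M unfolding eigvals_desc_def by auto
qed

definition trace :: "'a::comm_ring_1 mat \<Rightarrow> 'a" where
  "trace A = (\<Sum>i<dim_row A. A $$ (i, i))"

lemma trace_mult:
  assumes "A \<in> carrier_mat n m" and "B \<in> carrier_mat m n"
  shows "trace (A * B) = (\<Sum>i<n. \<Sum>j<m. A $$ (i, j) * B $$ (j, i))"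
  using assms by (auto simp: trace_def scalar_prod_def atLeast0LessThan intro!: sum.cong)

lemma trace_mult_comm:
  assumes "A \<in> carrier_mat n m" and "B \<in> carrier_mat m n"
  shows "trace (A * B) = trace (B * A)"
  unfolding trace_mult[OF assms] trace_mult[OF assms(2,1)]
  by (subst sum.swap) (simp add: mult.commute)

lemma trace_similar_mat_wit:
  assumes "similar_mat_wit A B P Q"
  shows "trace A = trace B"
proof -
  obtain n where A: "A \<in> carrier_mat n n" using assms unfolding similar_mat_wit_def Let_def by auto
  note wit = similar_mat_witD2[OF A assms]
  have "A = P * (B * Q)" using wit by simp
  then have "trace A = trace (B * Q * P)"
    using wit by (simp add: trace_mult_comm[of P n n "B * Q"])
  also have "B * Q * P = B"
    using wit by simp
  finally show ?thesis .
qed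

lemma upper_triangular_mult_diag:
  fixes A B :: "'a::comm_ring_1 mat"
  assumes "A \<in> carrier_mat n n" "B \<in> carrier_mat n n" "upper_triangular A" "upper_triangular B"
    and "i < n"
  shows "(A * B) $$ (i, i) = A $$ (i, i) * B $$ (i, i)"
proof -
  have "(A * B) $$ (i, i) = (\<Sum>j<n. A $$ (i, j) * B $$ (j, i))"
    using assms by (simp add: scalar_prod_def atLeast0LessThan)
  also have "\<dots> = (\<Sum>j<n. if j = i then A $$ (i, i) * B $$ (i, i) else 0)"
  proof (intro sum.cong refl)
    fix j assume "j \<in> {..<n}"
    then show "A $$ (i, j) * B $$ (j, i) = (if j = i then A $$ (i, i) * B $$ (i, i) else 0)"
      using assms by (cases i j rule: linorder_cases) (auto simp: upper_triangular_def)
  qed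
  finally show ?thesis using assms by simp
qed

lemma eigenvalue_sums_eq_trace:
  fixes M :: "'a::conjugatable_ordered_field mat"
  assumes M: "M \<in> carrier_mat n n" and cp: "char_poly M = (\<Prod>e\<leftarrow>es. [:-e, 1:])"
  shows "sum_list es = trace M" and "sum_list (map (\<lambda>e. e^2) es) = trace (M * M)"
proof -
  obtain B P Q where "schur_decomposition M es = (B, P, Q)" by (cases "schur_decomposition M es")
  from schur_decomposition[OF M cp this] have sim: "similar_mat_wit M B P Q"
    and ut: "upper_triangular B" and diag: "diag_mat B = es" by auto
  have B: "B \<in> carrier_mat n n" using similar_mat_witD2[OF M sim] by auto
  have es: "es = map (\<lambda>i. B $$ (i, i)) [0..<n]"
    using B diag unfolding diag_mat_def by simp
  have "sum_list es = trace B"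
    using B by (simp add: es trace_def sum_list_sum_nth atLeast0LessThan)
  then show "sum_list es = trace M"
    by (simp add: trace_similar_mat_wit[OF sim])
  have "similar_mat_wit (M * M) (B * B) P Q"
    using similar_mat_wit_pow[OF sim, of 2] by (simp add: numeral_2_eq_2)
  moreover have "trace (B * B) = sum_list (map (\<lambda>e. e^2) es)"
  proof -
    have "trace (B * B) = (\<Sum>i<n. (B * B) $$ (i, i))" using B by (simp add: trace_def)
    also have "\<dots> = (\<Sum>i<n. (B $$ (i, i))^2)"
      by (intro sum.cong refl)
        (simp add: upper_triangular_mult_diag[OF B B ut ut] power2_eq_square del: index_mult_mat)
    finally show ?thesis by (simp add: es sum_list_sum_nth atLeast0LessThan)
  qed
  ultimately show "sum_list (map (\<lambda>e. e^2) es) = trace (M * M)"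
    by (simp add: trace_similar_mat_wit)
qed

lemma two_block_deviation_bound:
  fixes p q S R Q1 Q2 :: real
  assumes p: "p > 0" and q: "q > 0" and S: "S^2 \<le> p * Q1" and R: "R^2 \<le> q * Q2"
  shows "(S - p * (S + R) / (p + q))^2 \<le> p * q / (p + q) * (Q1 + Q2 - (S + R)^2 / (p + q))"
proof -
  have "(q * S - p * R)^2 + q * (p + q) * (p * Q1 - S^2) + p * (p + q) * (q * Q2 - R^2)
      = p * q * ((p + q) * (Q1 + Q2) - (S + R)^2)"
    by (simp add: power2_eq_square algebra_simps)
  moreover have "0 \<le> q * (p + q) * (p * Q1 - S^2)" and "0 \<le> p * (p + q) * (q * Q2 - R^2)"
    using p q S R by simp_all
  ultimately have "(q * S - p * R)^2 \<le> p * q * ((p + q) * (Q1 + Q2) - (S + R)^2)"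
    by linarith
  then have "((q * S - p * R) / (p + q))^2 \<le> p * q * ((p + q) * (Q1 + Q2) - (S + R)^2) / (p + q)^2"
    by (simp add: power_divide divide_right_mono)
  moreover have "S - p * (S + R) / (p + q) = (q * S - p * R) / (p + q)"
    using p q by (simp add: field_simps)
  moreover have "p * q / (p + q) * (Q1 + Q2 - (S + R)^2 / (p + q))
      = p * q * ((p + q) * (Q1 + Q2) - (S + R)^2) / (p + q)^2"
    using p q by (simp add: field_simps power2_eq_square)
  ultimately show ?thesis by simp
qed

lemma sum_subset_le_mean_plus_sqrt_variance:
  fixes x :: "'a \<Rightarrow> real"
  assumes B: "finite B" and AB: "A \<subseteq> B" and card: "0 < card A" "card A < card B"
  defines "a \<equiv> real (card A)" and "b \<equiv> real (card B)"
  shows "(\<Sum>i\<in>A. x i) \<le> a * (\<Sum>i\<in>B. x i) / b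
    + sqrt (a * (b - a) / b * ((\<Sum>i\<in>B. (x i)^2) - (\<Sum>i\<in>B. x i)^2 / b))"
proof -
  define S R Q1 Q2 where "S = (\<Sum>i\<in>A. x i)" and "R = (\<Sum>i\<in>B - A. x i)"
    and "Q1 = (\<Sum>i\<in>A. (x i)^2)" and "Q2 = (\<Sum>i\<in>B - A. (x i)^2)"
  have A: "finite A" using B AB by (rule finite_subset[rotated])
  have card_diff: "real (card (B - A)) = b - a"
    using AB A unfolding a_def b_def by (simp add: card_Diff_subset of_nat_diff card_mono B)
  have split: "(\<Sum>i\<in>B. f i) = (\<Sum>i\<in>A. f i) + (\<Sum>i\<in>B - A. f i)" for f :: "'a \<Rightarrow> real"
    using B AB by (simp add: sum.subset_diff)
  have "S^2 \<le> a * Q1"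
    using sum_squared_le_sum_of_squares[of x A] unfolding S_def Q1_def a_def by (simp add: mult.commute)
  moreover have "R^2 \<le> (b - a) * Q2"
    using sum_squared_le_sum_of_squares[of x "B - A"] unfolding R_def Q2_def card_diff
    by (simp add: mult.commute)
  ultimately have "(S - a * (S + R) / b)^2 \<le> a * (b - a) / b * (Q1 + Q2 - (S + R)^2 / b)"
    using two_block_deviation_bound[of a "b - a"] card unfolding a_def b_def by simp
  then have "S - a * (S + R) / b \<le> sqrt (a * (b - a) / b * (Q1 + Q2 - (S + R)^2 / b))"
    by (rule real_le_rsqrt)
  then show ?thesis
    unfolding split[of x] split[of "\<lambda>i. (x i)^2"] S_def R_def Q1_def Q2_def by simp
qed

lemma popoviciu_variance_bound:
  fixes f :: "'a \<Rightarrow> real"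
  assumes I: "finite I" "I \<noteq> {}" and bounds: "\<And>i. i \<in> I \<Longrightarrow> lo \<le> f i \<and> f i \<le> hi"
  defines "N \<equiv> real (card I)"
  shows "(\<Sum>i\<in>I. (f i)^2) - (\<Sum>i\<in>I. f i)^2 / N \<le> N / 4 * (hi - lo)^2"
proof -
  define c where "c = (lo + hi) / 2"
  have N: "N > 0" using I unfolding N_def by (simp add: card_gt_0_iff)
  have "(\<Sum>i\<in>I. (f i - c)^2) = (\<Sum>i\<in>I. (f i)^2 - 2 * c * f i + c^2)"
    by (simp add: power2_eq_square algebra_simps)
  also have "\<dots> = (\<Sum>i\<in>I. (f i)^2) - 2 * c * (\<Sum>i\<in>I. f i) + N * c^2"
    unfolding N_def by (simp add: sum.distrib sum_subtractf sum_distrib_left)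
  also have "\<dots> = (\<Sum>i\<in>I. (f i)^2) - (\<Sum>i\<in>I. f i)^2 / N + (N * c - (\<Sum>i\<in>I. f i))^2 / N"
    using N by (simp add: field_simps power2_eq_square)
  finally have "(\<Sum>i\<in>I. (f i)^2) - (\<Sum>i\<in>I. f i)^2 / N \<le> (\<Sum>i\<in>I. (f i - c)^2)"
    using N by simp
  also have "\<dots> \<le> (\<Sum>i\<in>I. ((hi - lo) / 2)^2)"
  proof (rule sum_mono)
    fix i assume "i \<in> I"
    then have "lo \<le> f i" "f i \<le> hi" using bounds by auto
    then have "\<bar>f i - c\<bar> \<le> (hi - lo) / 2" unfolding c_def abs_le_iff by (simp add: field_simps)
    then show "(f i - c)^2 \<le> ((hi - lo) / 2)^2"
      by (metis abs_ge_zero abs_le_square_iff abs_of_nonneg order_trans)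
  qed
  also have "\<dots> = N / 4 * (hi - lo)^2"
    unfolding N_def by (simp add: power2_eq_square)
  finally show ?thesis .
qed

lemma S_k_real_symmetric_le_trace_bound:
  fixes M :: "real mat"
  assumes M: "M \<in> carrier_mat n n" and sym: "transpose_mat M = M" and k: "0 < k" "k < n"
  shows "S_k k M \<le> real k * trace M / real n
    + sqrt (real k * (real n - real k) / real n * (trace (M * M) - (trace M)^2 / real n))"
proof -
  define es where "es = eigvals_desc M"
  have len: "length es = n" and cp: "char_poly M = (\<Prod>e\<leftarrow>es. [:-e, 1:])"
    using eigvals_desc_real_symmetric[OF M sym] unfolding es_def by auto
  have "S_k k M = (\<Sum>i\<in>{..<k}. es ! i)"
    using len k by (simp add: S_k_def es_def sum_list_sum_nth atLeast0LessThan min_def)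
  moreover have "trace M = (\<Sum>i\<in>{..<n}. es ! i)"
    using eigenvalue_sums_eq_trace(1)[OF M cp] len by (simp add: sum_list_sum_nth atLeast0LessThan)
  moreover have "trace (M * M) = (\<Sum>i\<in>{..<n}. (es ! i)^2)"
    using eigenvalue_sums_eq_trace(2)[OF M cp] len by (simp add: sum_list_sum_nth atLeast0LessThan)
  ultimately show ?thesis
    using sum_subset_le_mean_plus_sqrt_variance[of "{..<n}" "{..<k}" "(!) es"] k
    by (simp add: of_nat_diff)
qed

lemma real_degree_eq_sum:
  "real (degree n E i) = (\<Sum>j<n. if E i j then 1 else 0)"
proof -
  have "{j. j < n \<and> E i j} = {j\<in>{..<n}. E i j}" by auto
  then show ?thesis by (simp add: degree_def sum.inter_filter[symmetric])
qed

lemma sum_degree_eq_twice_num_edges: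
  assumes "simple_graph n E"
  shows "(\<Sum>i<n. real (degree n E i)) = 2 * real (num_edges n E)"
proof -
  define f :: "nat \<Rightarrow> nat \<Rightarrow> real" where "f i j = (if i < j \<and> E i j then 1 else 0)" for i j
  have "{(i, j). i < j \<and> j < n \<and> E i j} = Sigma {..<n} (\<lambda>i. {j\<in>{..<n}. i < j \<and> E i j})"
    by auto
  then have edges: "real (num_edges n E) = (\<Sum>i<n. \<Sum>j<n. f i j)"
    by (simp add: num_edges_def f_def sum.inter_filter[symmetric])
  have "(\<Sum>i<n. real (degree n E i)) = (\<Sum>i<n. \<Sum>j<n. f i j + f j i)"
    using assms unfolding real_degree_eq_sum f_def simple_graph_def
    by (intro sum.cong refl) (auto simp: not_less_iff_gr_or_eq)
  also have "\<dots> = (\<Sum>i<n. \<Sum>j<n. f i j) + (\<Sum>i<n. \<Sum>j<n. f j i)"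
    by (simp add: sum.distrib)
  also have "(\<Sum>i<n. \<Sum>j<n. f j i) = (\<Sum>i<n. \<Sum>j<n. f i j)"
    by (rule sum.swap)
  finally show ?thesis unfolding edges by simp
qed

lemma min_degree_le_degree_le_max_degree:
  assumes "i < n"
  shows "min_degree n E \<le> degree n E i" and "degree n E i \<le> max_degree n E"
  using assms by (auto simp: min_degree_def max_degree_def intro!: Min_le Max_ge)

lemma A_alpha_carrier:
  fixes \<alpha> :: real
  shows "A_alpha \<alpha> n E \<in> carrier_mat n n"
  unfolding A_alpha_def deg_mat_def adj_mat_def by auto

lemma dim_A_alpha [simp]:
  fixes \<alpha> :: real
  shows "dim_row (A_alpha \<alpha> n E) = n" "dim_col (A_alpha \<alpha> n E) = n"
  using A_alpha_carrier by auto

lemma A_alpha_index: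
  fixes \<alpha> :: real
  assumes "i < n" "j < n"
  shows "A_alpha \<alpha> n E $$ (i, j)
    = (if i = j then \<alpha> * degree n E i else 0) + (1 - \<alpha>) * (if E i j then 1 else 0)"
  unfolding A_alpha_def deg_mat_def adj_mat_def using assms by auto

lemma transpose_A_alpha:
  fixes \<alpha> :: real
  assumes "simple_graph n E"
  shows "transpose_mat (A_alpha \<alpha> n E) = A_alpha \<alpha> n E"
proof (rule eq_matI)
  fix i j assume "i < dim_row (A_alpha \<alpha> n E)" "j < dim_col (A_alpha \<alpha> n E)"
  moreover from this have "E j i = E i j" using assms unfolding simple_graph_def by simp
  ultimately show "transpose_mat (A_alpha \<alpha> n E) $$ (i, j) = A_alpha \<alpha> n E $$ (i, j)"
    by (simp add: A_alpha_index)
qed simp_all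

lemma trace_A_alpha:
  fixes \<alpha> :: real
  assumes "simple_graph n E"
  shows "trace (A_alpha \<alpha> n E) = 2 * \<alpha> * num_edges n E"
proof -
  have "trace (A_alpha \<alpha> n E) = \<alpha> * (\<Sum>i<n. real (degree n E i))"
    using assms by (simp add: trace_def A_alpha_index simple_graph_def sum_distrib_left)
  then show ?thesis by (simp add: sum_degree_eq_twice_num_edges[OF assms])
qed

lemma trace_A_alpha_sq:
  fixes \<alpha> :: real
  assumes "simple_graph n E"
  shows "trace (A_alpha \<alpha> n E * A_alpha \<alpha> n E)
    = \<alpha>^2 * (\<Sum>i<n. (real (degree n E i))^2) + (1 - \<alpha>)^2 * (2 * num_edges n E)"
proof -
  let ?A = "A_alpha \<alpha> n E"
  have "?A $$ (i, j) * ?A $$ (j, i)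
      = (if i = j then \<alpha>^2 * (real (degree n E i))^2 else 0) + (1 - \<alpha>)^2 * (if E i j then 1 else 0)"
    if "i < n" "j < n" for i j
    using assms that by (auto simp: A_alpha_index simple_graph_def power2_eq_square)
  then have "trace (?A * ?A) = (\<Sum>i<n. \<alpha>^2 * (real (degree n E i))^2 + (1 - \<alpha>)^2 * real (degree n E i))"
    by (simp add: trace_mult[OF A_alpha_carrier A_alpha_carrier] real_degree_eq_sum sum.distrib
        sum_distrib_left)
  then show ?thesis
    by (simp add: sum.distrib sum_distrib_left[symmetric] sum_degree_eq_twice_num_edges[OF assms])
qed

lemma trace_A_alpha_variance_le:
  fixes \<alpha> :: real
  assumes "simple_graph n E" and "0 < n"
  shows "trace (A_alpha \<alpha> n E * A_alpha \<alpha> n E) - (trace (A_alpha \<alpha> n E))^2 / n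
    \<le> 2 * num_edges n E * (1 - \<alpha>)^2
      + \<alpha>^2 * n / 4 * (real (max_degree n E) - real (min_degree n E))^2"
proof -
  define D2 D where "D2 = (\<Sum>i<n. (real (degree n E i))^2)"
    and "D = (\<Sum>i<n. real (degree n E i))"
  have "D2 - D^2 / n \<le> n / 4 * (real (max_degree n E) - real (min_degree n E))^2"
    using popoviciu_variance_bound[where I = "{..<n}" and f = "\<lambda>i. real (degree n E i)"
        and lo = "real (min_degree n E)" and hi = "real (max_degree n E)"] assms(2)
      min_degree_le_degree_le_max_degree[of _ n E]
    unfolding D2_def D_def by (simp add: lessThan_empty_iff)
  then have "\<alpha>^2 * (D2 - D^2 / n)
      \<le> \<alpha>^2 * (n / 4 * (real (max_degree n E) - real (min_degree n E))^2)"
    by (rule mult_left_mono) simp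
  moreover have "trace (A_alpha \<alpha> n E) = \<alpha> * D"
    unfolding trace_A_alpha[OF assms(1)] D_def sum_degree_eq_twice_num_edges[OF assms(1)] by simp
  moreover have "trace (A_alpha \<alpha> n E * A_alpha \<alpha> n E)
      = \<alpha>^2 * D2 + (1 - \<alpha>)^2 * (2 * num_edges n E)"
    unfolding trace_A_alpha_sq[OF assms(1)] D2_def ..
  ultimately show ?thesis
    by (simp add: power_mult_distrib right_diff_distrib mult_ac)
qed

theorem corollary3p1:
  fixes \<alpha> :: real and n k :: nat and E :: "nat \<Rightarrow> nat \<Rightarrow> bool"
  assumes "simple_graph n E"
    and "1/2 \<le> \<alpha>" and "\<alpha> < 1"
    and "1 \<le> k" and "k \<le> n - 1"
  shows "S_k k (A_alpha \<alpha> n E) \<le>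
    2 * \<alpha> * k * num_edges n E / n
    + sqrt (k * (n - k) / n *
        (2 * num_edges n E * (1 - \<alpha>)^2
         + \<alpha>^2 * n / 4 * (real (max_degree n E) - real (min_degree n E))^2))"
proof -
  let ?A = "A_alpha \<alpha> n E"
  let ?bound = "2 * num_edges n E * (1 - \<alpha>)^2
    + \<alpha>^2 * n / 4 * (real (max_degree n E) - real (min_degree n E))^2"
  have k: "0 < k" "k < n" using assms(4,5) by auto
  have var: "trace (?A * ?A) - (trace ?A)^2 / real n \<le> ?bound"
    using trace_A_alpha_variance_le[OF assms(1)] k by simp
  have "S_k k ?A \<le> real k * trace ?A / real n
      + sqrt (real k * (real n - real k) / real n * (trace (?A * ?A) - (trace ?A)^2 / real n))"
    using S_k_real_symmetric_le_trace_bound[OF A_alpha_carrier transpose_A_alpha[OF assms(1)] k] .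
  also have "real k * trace ?A / real n = 2 * \<alpha> * k * num_edges n E / n"
    by (simp add: trace_A_alpha[OF assms(1)] mult_ac)
  also have "sqrt (real k * (real n - real k) / real n * (trace (?A * ?A) - (trace ?A)^2 / real n))
      \<le> sqrt (real k * (real n - real k) / real n * ?bound)"
    using var k by (intro real_sqrt_le_mono mult_left_mono) simp_all
  finally show ?thesis
    using k by (simp add: of_nat_diff)
qed

end
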